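(* For all positive integers $n$ and $k$, $$\sum_{i=1}^{k}(-1)^i\binom{ni+k-1}{k}\binom{k+1}{i+1}=(-1)^k\binom{n}{k}.$$
   Context: Binomial coefficients $\binom{m}{j}$ for nonnegative integers $m,j$ are the usual ones, with $\binom{m}{j}=0$ when $j>m$. *)

theory Defs
  imports Main
begin

end

theory Submission
  imports Defs "HOL-Computational_Algebra.Polynomial"
begin

text \<open>The map \<open>g x = (n (x - 1) + k - 1) gchoose k\<close> is a polynomial of degree \<open>k\<close>, so its
  \<open>(k+1)\<close>-st finite difference \<open>\<Sum>j\<le>k+1. (-1)^j (k+1 choose j) g j\<close> vanishes. Evaluating \<open>g\<close> at
  \<open>j = 0\<close> gives \<open>(-1)^k (n choose k)\<close> by negating the upper index, at \<open>j = 1\<close> it gives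
  \<open>(k - 1) choose k = 0\<close>, and the remaining terms \<open>j = i + 1\<close> are the summands of the identity.\<close>

lemma alternating_binomial_sum_shifted_power:
  fixes a :: "'a::comm_ring_1"
  assumes "r < m"
  shows "(\<Sum>j\<le>m. (-1)^j * of_nat (m choose j) * (of_nat j + a)^r) = 0"
  using assms
proof (induction r arbitrary: m a)
  case 0
  then show ?case using choose_alternating_sum by simp
next
  case (Suc r)
  then obtain m' where m: "m = Suc m'" and "r < m'" by (cases m) auto
  have absorption: "(-1)^Suc j * of_nat (m choose Suc j) * of_nat (Suc j)
      = - of_nat m * ((-1)^j * of_nat (m' choose j) :: 'a)" for j
  proof -
    have "Suc j * (m choose Suc j) = m * (m' choose j)"
      by (simp only: binomial_absorption m diff_Suc_1)
    then have of_nat_absorption: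
        "of_nat (Suc j) * of_nat (m choose Suc j) = (of_nat m * of_nat (m' choose j) :: 'a)"
      by (metis of_nat_mult)
    have "(-1)^Suc j * of_nat (m choose Suc j) * of_nat (Suc j)
        = - ((-1)^j * (of_nat (Suc j) * of_nat (m choose Suc j)) :: 'a)"
      by (simp only: power_Suc ac_simps mult_minus_left mult_minus_right mult_1)
    also have "\<dots> = - of_nat m * ((-1)^j * of_nat (m' choose j))"
      unfolding of_nat_absorption by (simp add: ac_simps)
    finally show ?thesis .
  qed
  have "(\<Sum>j\<le>m. (-1)^j * of_nat (m choose j) * of_nat j * (of_nat j + a)^r)
      = (\<Sum>j\<le>m'. (-1)^Suc j * of_nat (m choose Suc j) * of_nat (Suc j) * (of_nat j + (1 + a))^r)"
    unfolding m by (subst sum.atMost_Suc_shift) (simp add: add_ac)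
  also have "\<dots> = - of_nat m * (\<Sum>j\<le>m'. (-1)^j * of_nat (m' choose j) * (of_nat j + (1 + a))^r)"
    unfolding absorption by (simp add: sum_distrib_left mult.assoc)
  also have "\<dots> = 0"
    using Suc.IH[OF \<open>r < m'\<close>] by simp
  finally have weighted: "(\<Sum>j\<le>m. (-1)^j * of_nat (m choose j) * of_nat j * (of_nat j + a)^r) = 0" .
  have "(\<Sum>j\<le>m. (-1)^j * of_nat (m choose j) * (of_nat j + a)^Suc r)
      = (\<Sum>j\<le>m. (-1)^j * of_nat (m choose j) * of_nat j * (of_nat j + a)^r)
        + a * (\<Sum>j\<le>m. (-1)^j * of_nat (m choose j) * (of_nat j + a)^r)"
    by (simp add: sum.distrib sum_distrib_left algebra_simps)
  also have "\<dots> = 0"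
    using weighted Suc.IH Suc.prems by simp
  finally show ?case .
qed

lemma alternating_binomial_sum_poly:
  fixes p :: "'a::comm_ring_1 poly"
  assumes "degree p < m"
  shows "(\<Sum>j\<le>m. (-1)^j * of_nat (m choose j) * poly p (of_nat j)) = 0"
proof -
  have "(\<Sum>j\<le>m. (-1)^j * of_nat (m choose j) * poly p (of_nat j))
      = (\<Sum>i\<le>degree p. coeff p i * (\<Sum>j\<le>m. (-1)^j * of_nat (m choose j) * of_nat j ^ i))"
    unfolding poly_altdef
    by (simp add: sum_distrib_left sum_distrib_right algebra_simps sum.swap[of _ "{..m}"])
  also have "\<dots> = 0"
  proof (intro sum.neutral ballI)
    fix i assume "i \<in> {..degree p}"
    with assms have "i < m" by simp
    from alternating_binomial_sum_shifted_power[OF this, where a = "0 :: 'a"]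
    show "coeff p i * (\<Sum>j\<le>m. (-1)^j * of_nat (m choose j) * of_nat j ^ i) = 0" by simp
  qed
  finally show ?thesis .
qed

lemma gbinomial_affine_is_poly:
  fixes c d :: "'a::field_char_0"
  obtains p where "degree p \<le> k" and "\<And>x. poly p x = (c * x + d) gchoose k"
proof
  let ?p = "smult (1 / fact k) (\<Prod>i<k. [:d - of_nat i, c:])"
  show "poly ?p x = (c * x + d) gchoose k" for x
    by (simp add: gbinomial_prod_rev poly_prod atLeast0LessThan algebra_simps)
  have "degree ?p \<le> (\<Sum>i<k. degree [:d - of_nat i, c:])"
    using degree_prod_sum_le[of "{..<k}" "\<lambda>i. [:d - of_nat i, c:]"]
    by (simp add: o_def)
  also have "\<dots> \<le> k"
    using sum_mono[of "{..<k}" "\<lambda>i. degree [:d - of_nat i, c:]" "\<lambda>_. 1"] by simp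
  finally show "degree ?p \<le> k" .
qed

lemma alternating_binomial_sum_gbinomial_affine:
  fixes c d :: "'a::field_char_0"
  shows "(\<Sum>j\<le>Suc k. (-1)^j * of_nat (Suc k choose j) * ((c * of_nat j + d) gchoose k)) = 0"
proof -
  obtain p where "degree p \<le> k" and "\<And>x. poly p x = (c * x + d) gchoose k"
    using gbinomial_affine_is_poly by blast
  then show ?thesis
    using alternating_binomial_sum_poly[of p "Suc k"] by simp
qed

lemma gbinomial_of_nat_negated_upper:
  "(of_nat k - of_nat n - 1 :: 'a::field_char_0) gchoose k = (-1)^k * of_nat (n choose k)"
  by (subst gbinomial_negated_upper) (simp add: binomial_gbinomial)

lemma gbinomial_of_nat_affine:
  assumes "j \<ge> 1" and "k \<ge> 1"
  shows "(of_nat n * of_nat j + (of_nat k - of_nat n - 1) :: 'a::field_char_0) gchoose k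
       = of_nat ((n * (j - 1) + k - 1) choose k)"
proof -
  obtain i where j: "j = Suc i" using \<open>j \<ge> 1\<close> by (cases j) auto
  have "of_nat n * of_nat j + (of_nat k - of_nat n - 1) = (of_nat (n * (j - 1) + k - 1) :: 'a)"
    unfolding j using \<open>k \<ge> 1\<close> by (simp add: algebra_simps)
  then show ?thesis by (simp only: binomial_gbinomial)
qed

theorem mainTheorem8:
  fixes n k :: nat
  assumes "n \<ge> 1" and "k \<ge> 1"
  shows "(\<Sum>i=1..k. (-1::int)^i * int ((n*i + k - 1) choose k) * int ((k+1) choose (i+1)))
         = (-1)^k * int (n choose k)"
proof -
  define f :: "nat \<Rightarrow> real"
    where "f j = (-1)^j * real (Suc k choose j) * ((real n * real j + (real k - real n - 1)) gchoose k)" for j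
  have shifted_term: "f (Suc i) = - ((-1)^i * real ((n*i + k - 1) choose k) * real ((k+1) choose (i+1)))" for i
    using \<open>k \<ge> 1\<close> by (simp add: f_def gbinomial_of_nat_affine del: of_nat_Suc)
  have f1: "f 1 = 0"
    using gbinomial_of_nat_affine[of 1 k n, where 'a = real] \<open>k \<ge> 1\<close> by (simp add: f_def)
  have f0: "f 0 = (-1)^k * real (n choose k)"
    unfolding f_def by (simp add: gbinomial_of_nat_negated_upper)
  have "0 = (\<Sum>j\<le>Suc k. f j)"
    unfolding f_def by (rule alternating_binomial_sum_gbinomial_affine[symmetric])
  also have "\<dots> = f 0 + f 1 + (\<Sum>i=1..k. f (Suc i))"
    unfolding sum.atMost_Suc_shift unfolding atMost_atLeast0
    by (simp only: sum.atLeast_Suc_atMost[OF le0] One_nat_def add.assoc)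
  also have "\<dots> = (-1)^k * real (n choose k)
      - (\<Sum>i=1..k. (-1)^i * real ((n*i + k - 1) choose k) * real ((k+1) choose (i+1)))"
    using f0 f1 shifted_term by (simp add: sum_negf[symmetric])
  finally show ?thesis
    by (simp flip: of_int_eq_iff[where 'a = real])
qed

end
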